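(* For every $h\in(\tfrac12,\tfrac34)$ and every integer $k\ge1$, $$\rho_h(k)\ge\frac{h(2h-1)}{2k^{2-2h}}.$$ In particular $\sum_{k=1}^\infty\rho_h^2(k)\ge\frac{h^2(2h-1)^2}{4}\zeta(4-4h)$, where $\zeta$ is the Riemann zeta function, and consequently $\lim_{h\to\frac34-}\sum_{k=1}^\infty\rho_h^2(k)=\infty$.
   Context: $\rho_h(k)=\frac12\big((k+1)^{2h}+(k-1)^{2h}-2k^{2h}\big)$. *)

theory Defs
  imports "HOL-Analysis.Analysis"
begin

definition rho :: "real \<Rightarrow> nat \<Rightarrow> real" where
  "rho h k = ((real k + 1) powr (2*h) + (real k - 1) powr (2*h) - 2 * real k powr (2*h)) / 2"

definition zeta_real :: "real \<Rightarrow> real" where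
  "zeta_real s = (\<Sum>n. 1 / real (Suc n) powr s)"

end

theory Submission
  imports Defs
begin

text \<open>Write a = 2h, so 1 < a \<le> 2. For k > 1 the function
  \<phi>(x) = (k+x)^a + (k-x)^a - a(a-1)/2 k^(a-2) x^2 is nondecreasing on [0, 1], because concavity
  of t^(a-1) gives (k+x)^(a-1) - (k-x)^(a-1) \<ge> (a-1) k^(a-2) x; comparing \<phi>(0) with \<phi>(1) yields
  \<rho>(k) \<ge> h(2h-1) k^(2h-2). Squaring and summing gives the bound by \<zeta>(4-4h), the series being
  convergent by the matching tangent-line upper bound O(k^(2h-2)); finally \<zeta>(s) \<rightarrow> \<infinity> as s \<rightarrow> 1+
  by comparison with the harmonic numbers.\<close>

lemma powr_above_tangent:
  fixes x y p :: real
  assumes "p \<ge> 1" "x > 0" "y \<ge> 0"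
  shows "x powr p + p * x powr (p - 1) * (y - x) \<le> y powr p"
proof (cases "y = 0")
  case True
  then show ?thesis using assms by (simp add: powr_diff mult_nonneg_nonneg)
next
  case False
  have "(y powr p) powr (1/p) * (x powr p) powr (1 - 1/p) \<le> 1/p * y powr p + (1 - 1/p) * x powr p"
    using assms False by (intro Youngs_inequality_0) (auto simp: field_simps)
  then have "y * x powr (p - 1) \<le> 1/p * y powr p + (1 - 1/p) * x powr p"
    using assms by (simp add: powr_powr algebra_simps)
  then have "p * (y * x powr (p - 1)) \<le> p * (1/p * y powr p + (1 - 1/p) * x powr p)"
    using assms by (intro mult_left_mono) auto
  also have "\<dots> = y powr p + (p - 1) * x powr p"
    using assms by (simp add: field_simps)
  finally show ?thesis
    using assms by (simp add: powr_diff field_simps)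
qed

lemma powr_below_tangent:
  fixes x y p :: real
  assumes "0 < p" "p \<le> 1" "x > 0" "y \<ge> 0"
  shows "y powr p \<le> x powr p + p * x powr (p - 1) * (y - x)"
proof (cases "y = 0")
  case True
  then show ?thesis using assms by (simp add: powr_diff)
next
  case False
  have "y powr p * x powr (1 - p) \<le> p * y + (1 - p) * x"
    using assms False by (intro Youngs_inequality_0) auto
  then have "x powr (p - 1) * (y powr p * x powr (1 - p)) \<le> x powr (p - 1) * (p * y + (1 - p) * x)"
    by (intro mult_left_mono) auto
  then show ?thesis
    using assms by (simp add: powr_diff field_simps)
qed

lemma two_powr_ge:
  fixes a :: real
  assumes "1 \<le> a" "a \<le> 2"
  shows "2 + a * (a - 1) / 2 \<le> 2 powr a"
proof -
  have "1 + a \<le> 2 powr a"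
    using powr_above_tangent[of a 1 2] assms by simp
  moreover have "a * (a - 1) / 2 \<le> a - 1"
    using mult_nonneg_nonneg[of "a - 1" "2 - a"] assms by (simp add: field_simps algebra_simps)
  ultimately show ?thesis
    by linarith
qed

lemma powr_second_difference_ge:
  fixes a K :: real
  assumes a: "1 < a" "a \<le> 2" and K: "K \<ge> 1"
  shows "2 * K powr a + a * (a - 1) / 2 * K powr (a - 2) \<le> (K + 1) powr a + (K - 1) powr a"
proof (cases "K = 1")
  case True
  then show ?thesis using two_powr_ge[of a] a by simp
next
  case False
  define c where "c = a * (a - 1) / 2 * K powr (a - 2)"
  define \<phi> where "\<phi> = (\<lambda>x. (K + x) powr a + (K - x) powr a - c * x^2)"
  have "\<phi> 0 \<le> \<phi> 1"
  proof (rule DERIV_nonneg_imp_nondecreasing[of 0 1 \<phi>])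
    fix x :: real assume x: "0 \<le> x" "x \<le> 1"
    define \<phi>' where "\<phi>' = a * ((K + x) powr (a - 1) - (K - x) powr (a - 1)) - 2 * c * x"
    have "(\<phi> has_real_derivative \<phi>') (at x)"
      unfolding \<phi>_def \<phi>'_def using x K False
      by (auto intro!: derivative_eq_intros simp: algebra_simps)
    moreover have "K powr (a - 1) \<le> (K + x) powr (a - 1)"
      using x K a by (intro powr_mono2) auto
    moreover have "(K - x) powr (a - 1) \<le> K powr (a - 1) - (a - 1) * K powr (a - 2) * x"
      using x K a powr_below_tangent[of "a - 1" K "K - x"] by (simp add: algebra_simps)
    ultimately have "a * ((a - 1) * K powr (a - 2) * x) \<le> a * ((K + x) powr (a - 1) - (K - x) powr (a - 1))"
      using a by (intro mult_left_mono) auto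
    then have "0 \<le> \<phi>'"
      unfolding \<phi>'_def c_def by (simp add: field_simps)
    then show "\<exists>y. (\<phi> has_real_derivative y) (at x) \<and> 0 \<le> y"
      using \<open>(\<phi> has_real_derivative \<phi>') (at x)\<close> by blast
  qed simp
  then show ?thesis
    unfolding \<phi>_def c_def by simp
qed

lemma powr_second_difference_le:
  fixes a K :: real
  assumes a: "1 < a" "a \<le> 2" and K: "K > 1"
  shows "(K + 1) powr a + (K - 1) powr a - 2 * K powr a \<le> 2 * a * (a - 1) * (K - 1) powr (a - 2)"
proof -
  have "(K + 1) powr a - a * (K + 1) powr (a - 1) \<le> K powr a"
    using powr_above_tangent[of a "K + 1" K] a K by simp
  moreover have "(K - 1) powr a + a * (K - 1) powr (a - 1) \<le> K powr a"
    using powr_above_tangent[of a "K - 1" K] a K by simp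
  moreover have "(K + 1) powr (a - 1) \<le> (K - 1) powr (a - 1) + 2 * (a - 1) * (K - 1) powr (a - 2)"
    using powr_below_tangent[of "a - 1" "K - 1" "K + 1"] a K by (simp add: algebra_simps)
  then have "a * (K + 1) powr (a - 1) \<le> a * ((K - 1) powr (a - 1) + 2 * (a - 1) * (K - 1) powr (a - 2))"
    using a by (intro mult_left_mono) auto
  ultimately show ?thesis
    by (simp add: algebra_simps)
qed

lemma rho_ge:
  fixes h :: real and k :: nat
  assumes h: "1/2 < h" "h \<le> 1" and k: "k \<ge> 1"
  shows "h * (2*h - 1) / (2 * real k powr (2 - 2*h)) \<le> rho h k"
proof -
  have "h * (2*h - 1) * real k powr (2*h - 2)
          \<le> (real k + 1) powr (2*h) + (real k - 1) powr (2*h) - 2 * real k powr (2*h)"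
    using powr_second_difference_ge[of "2*h" "real k"] h k by (simp add: field_simps)
  then have "h * (2*h - 1) * real k powr (2*h - 2) / 2 \<le> rho h k"
    unfolding rho_def by (rule divide_right_mono) simp
  moreover have "real k powr (2*h - 2) = 1 / real k powr (2 - 2*h)"
    using powr_minus_divide[of "real k" "2 - 2*h"] by simp
  ultimately show ?thesis
    by simp
qed

lemma rho_nonneg:
  fixes h :: real and k :: nat
  assumes "1/2 < h" "h \<le> 1" "k \<ge> 1"
  shows "0 \<le> rho h k"
proof -
  have "0 \<le> h * (2*h - 1) / (2 * real k powr (2 - 2*h))"
    using assms by simp
  then show ?thesis
    using rho_ge[OF assms] by linarith
qed

lemma rho_le:
  fixes h :: real and k :: nat
  assumes "1/2 < h" "h \<le> 1" "k \<ge> 2"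
  shows "rho h k \<le> 2 * h * (2*h - 1) * (real k - 1) powr (2*h - 2)"
  using powr_second_difference_le[of "2*h" "real k"] assms by (simp add: rho_def)

lemma summable_rho_squared:
  fixes h :: real
  assumes h: "1/2 < h" "h < 3/4"
  shows "summable (\<lambda>k. (rho h (Suc k))^2)"
proof -
  define C where "C = (2 * h * (2*h - 1))^2"
  have "summable (\<lambda>n. C * real n powr (4*h - 4))"
    using h by (intro summable_mult) (simp add: summable_real_powr_iff)
  then show ?thesis
  proof (rule summable_comparison_test'[where N = 1])
    fix n :: nat assume n: "n \<ge> 1"
    have "(rho h (Suc n))^2 \<le> (2 * h * (2*h - 1) * real n powr (2*h - 2))^2"
      using rho_nonneg[of h "Suc n"] rho_le[of h "Suc n"] h n by (intro power_mono) auto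
    also have "\<dots> = C * (real n powr (2*h - 2))^2"
      by (simp add: C_def power_mult_distrib)
    also have "(real n powr (2*h - 2))^2 = real n powr (4*h - 4)"
      using n by (simp add: powr_power)
    finally show "norm ((rho h (Suc n))^2) \<le> C * real n powr (4*h - 4)"
      by simp
  qed
qed

lemma summable_inverse_Suc_powr:
  fixes s :: real
  assumes "s > 1"
  shows "summable (\<lambda>n. 1 / real (Suc n) powr s)"
proof -
  have "summable (\<lambda>n. real (Suc n) powr (-s))"
    using assms by (subst summable_Suc_iff) (simp add: summable_real_powr_iff)
  then show ?thesis
    by (simp add: powr_minus_divide)
qed

lemma suminf_rho_squared_ge:
  fixes h :: real
  assumes h: "1/2 < h" "h < 3/4"
  shows "h^2 * (2*h - 1)^2 / 4 * zeta_real (4 - 4*h) \<le> (\<Sum>k. (rho h (Suc k))^2)"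
proof -
  define c where "c = h^2 * (2*h - 1)^2 / 4"
  have zeta: "summable (\<lambda>n. 1 / real (Suc n) powr (4 - 4*h))"
    using h by (intro summable_inverse_Suc_powr) simp
  have "c * zeta_real (4 - 4*h) = (\<Sum>n. c * (1 / real (Suc n) powr (4 - 4*h)))"
    unfolding zeta_real_def by (rule suminf_mult[OF zeta, symmetric])
  also have "\<dots> \<le> (\<Sum>k. (rho h (Suc k))^2)"
  proof (rule suminf_le)
    fix n :: nat
    define P where "P = real (Suc n) powr (2 - 2*h)"
    have "0 \<le> h * (2*h - 1) / (2 * P)"
      using h by (simp add: P_def)
    then have "(h * (2*h - 1) / (2 * P))^2 \<le> (rho h (Suc n))^2"
      using rho_ge[of h "Suc n"] h unfolding P_def by (intro power_mono) auto
    moreover have "P^2 = real (Suc n) powr (4 - 4*h)"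
      unfolding P_def by (simp add: powr_power)
    then have "(h * (2*h - 1) / (2 * P))^2 = c * (1 / real (Suc n) powr (4 - 4*h))"
      by (simp add: c_def power_divide power_mult_distrib)
    ultimately show "c * (1 / real (Suc n) powr (4 - 4*h)) \<le> (rho h (Suc n))^2"
      by simp
  qed (use summable_mult[OF zeta] summable_rho_squared[OF h] in auto)
  finally show ?thesis
    unfolding c_def .
qed

lemma filterlim_zeta_real_at_top: "filterlim zeta_real at_top (at_right 1)"
  unfolding filterlim_at_top
proof
  fix Z :: real
  have "eventually (\<lambda>n. Z + 1 \<le> harm n) sequentially"
    using harm_at_top unfolding filterlim_at_top by blast
  then obtain N where N: "Z + 1 \<le> harm N"
    by (auto simp: eventually_sequentially)
  define S where "S = (\<lambda>s. \<Sum>n<N. 1 / real (Suc n) powr s)"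
  have "isCont S 1"
    unfolding S_def by (intro continuous_intros) auto
  then have "(S \<longlongrightarrow> S 1) (at_right 1)"
    unfolding isCont_def by (rule tendsto_within_subset) simp
  moreover have "S 1 = harm N"
    by (simp add: S_def harm_altdef inverse_eq_divide)
  ultimately have "eventually (\<lambda>s. Z < S s) (at_right 1)"
    using N by (intro order_tendstoD(1)) auto
  moreover have "eventually (\<lambda>s. 1 < s) (at_right (1::real))"
    by (rule eventually_at_right_less)
  ultimately show "eventually (\<lambda>s. Z \<le> zeta_real s) (at_right 1)"
  proof eventually_elim
    case (elim s)
    have "S s \<le> zeta_real s"
      unfolding S_def zeta_real_def
      using elim by (intro sum_le_suminf summable_inverse_Suc_powr) auto
    then show ?case
      using elim by simp
  qed
qed

lemma filterlim_suminf_rho_squared_at_top: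
  "filterlim (\<lambda>h. \<Sum>k. (rho h (Suc k))^2) at_top (at_left (3/4))"
proof (rule filterlim_at_top_mono)
  have near: "eventually (\<lambda>h. h \<in> {1/2<..<3/4}) (at_left (3/4::real))"
    by (rule eventually_at_left_real) simp
  have "filterlim (\<lambda>h. 4 - 4*h) (at_right 1) (at_left (3/4::real))"
  proof (rule tendsto_imp_filterlim_at_right)
    show "((\<lambda>h. 4 - 4*h) \<longlongrightarrow> 1) (at_left (3/4::real))"
      by (auto intro!: tendsto_eq_intros)
    show "eventually (\<lambda>h. 1 < 4 - 4*h) (at_left (3/4::real))"
      using near by eventually_elim auto
  qed
  then have "filterlim (\<lambda>h. zeta_real (4 - 4*h)) at_top (at_left (3/4))"
    by (rule filterlim_compose[OF filterlim_zeta_real_at_top])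
  moreover have "((\<lambda>h. h^2 * (2*h - 1)^2 / 4) \<longlongrightarrow> 9/256) (at_left (3/4::real))"
    by (auto intro!: tendsto_eq_intros simp: power2_eq_square)
  ultimately show "filterlim (\<lambda>h. h^2 * (2*h - 1)^2 / 4 * zeta_real (4 - 4*h)) at_top (at_left (3/4))"
    by (intro filterlim_tendsto_pos_mult_at_top) auto
  show "eventually (\<lambda>h. h^2 * (2*h - 1)^2 / 4 * zeta_real (4 - 4*h) \<le> (\<Sum>k. (rho h (Suc k))^2))
          (at_left (3/4))"
    by (rule eventually_mono[OF near], rule suminf_rho_squared_ge) auto
qed

theorem lemmaA4:
  shows "(\<forall>h k. 1/2 < h \<and> h < 3/4 \<and> k \<ge> 1 \<longrightarrow>
            rho h k \<ge> h * (2*h - 1) / (2 * real k powr (2 - 2*h)))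
       \<and> (\<forall>h. 1/2 < h \<and> h < 3/4 \<longrightarrow>
            (\<Sum>k. (rho h (Suc k))^2) \<ge> h^2 * (2*h - 1)^2 / 4 * zeta_real (4 - 4*h))
       \<and> filterlim (\<lambda>h. \<Sum>k. (rho h (Suc k))^2) at_top (at_left (3/4))"
proof (intro conjI allI impI)
  fix h :: real and k :: nat
  assume "1/2 < h \<and> h < 3/4 \<and> k \<ge> 1"
  then show "rho h k \<ge> h * (2*h - 1) / (2 * real k powr (2 - 2*h))"
    by (intro rho_ge) auto
next
  fix h :: real
  assume "1/2 < h \<and> h < 3/4"
  then show "(\<Sum>k. (rho h (Suc k))^2) \<ge> h^2 * (2*h - 1)^2 / 4 * zeta_real (4 - 4*h)"
    by (intro suminf_rho_squared_ge) auto
qed (rule filterlim_suminf_rho_squared_at_top)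

end
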